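(* For every integer $m \geq 3$, $m \leq \gamma_{b,2}(P_m \square C_5) \leq m+1$.
   Context: For a graph $G$, a $2$-limited broadcast is a function $f: V(G) \to \{0,1,2\}$. A vertex $u$ hears the broadcast from $v$ if $f(v) > 0$ and $d(u,v) \leq f(v)$, where $d$ is the distance in $G$. The broadcast $f$ is dominating if every vertex of $G$ hears the broadcast from some vertex. The cost of $f$ is $\sum_{v \in V(G)} f(v)$. The $2$-limited broadcast domination number $\gamma_{b,2}(G)$ is the minimum cost of a $2$-limited dominating broadcast on $G$. $C_5$ denotes the cycle on $5$ vertices, $P_m$ the path on $m$ vertices, and $\square$ the Cartesian product of graphs. *)

theory Defs
  imports Main
begin

definition is_walk :: "'a set \<Rightarrow> ('a \<Rightarrow> 'a \<Rightarrow> bool) \<Rightarrow> 'a list \<Rightarrow> bool" where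
  "is_walk V E xs \<longleftrightarrow> xs \<noteq> [] \<and> set xs \<subseteq> V \<and>
     (\<forall>i. Suc i < length xs \<longrightarrow> E (xs ! i) (xs ! Suc i))"

definition gdist :: "'a set \<Rightarrow> ('a \<Rightarrow> 'a \<Rightarrow> bool) \<Rightarrow> 'a \<Rightarrow> 'a \<Rightarrow> nat" where
  "gdist V E u v = (LEAST n. \<exists>xs. is_walk V E xs \<and> hd xs = u \<and> last xs = v \<and> length xs = Suc n)"

definition two_limited_broadcast :: "'a set \<Rightarrow> ('a \<Rightarrow> nat) \<Rightarrow> bool" where
  "two_limited_broadcast V f \<longleftrightarrow> (\<forall>v\<in>V. f v \<le> 2)"

definition hears :: "'a set \<Rightarrow> ('a \<Rightarrow> 'a \<Rightarrow> bool) \<Rightarrow> ('a \<Rightarrow> nat) \<Rightarrow> 'a \<Rightarrow> 'a \<Rightarrow> bool" where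
  "hears V E f u v \<longleftrightarrow> f v > 0 \<and> gdist V E u v \<le> f v"

definition dominating_broadcast :: "'a set \<Rightarrow> ('a \<Rightarrow> 'a \<Rightarrow> bool) \<Rightarrow> ('a \<Rightarrow> nat) \<Rightarrow> bool" where
  "dominating_broadcast V E f \<longleftrightarrow> (\<forall>u\<in>V. \<exists>v\<in>V. hears V E f u v)"

definition broadcast_cost :: "'a set \<Rightarrow> ('a \<Rightarrow> nat) \<Rightarrow> nat" where
  "broadcast_cost V f = (\<Sum>v\<in>V. f v)"

definition gamma_b2 :: "'a set \<Rightarrow> ('a \<Rightarrow> 'a \<Rightarrow> bool) \<Rightarrow> nat" where
  "gamma_b2 V E = (LEAST c. \<exists>f. two_limited_broadcast V f \<and> dominating_broadcast V E f
                              \<and> broadcast_cost V f = c)"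

definition path_V :: "nat \<Rightarrow> nat set" where "path_V m = {0..<m}"
definition path_E :: "nat \<Rightarrow> nat \<Rightarrow> bool" where "path_E i j \<longleftrightarrow> i = Suc j \<or> j = Suc i"

definition cycle_V :: "nat \<Rightarrow> nat set" where "cycle_V n = {0..<n}"
definition cycle_E :: "nat \<Rightarrow> nat \<Rightarrow> nat \<Rightarrow> bool" where
  "cycle_E n i j \<longleftrightarrow> i \<noteq> j \<and> (j = Suc i mod n \<or> i = Suc j mod n)"

definition cprod_V :: "'a set \<Rightarrow> 'b set \<Rightarrow> ('a \<times> 'b) set" where
  "cprod_V V1 V2 = V1 \<times> V2"
definition cprod_E :: "('a \<Rightarrow> 'a \<Rightarrow> bool) \<Rightarrow> ('b \<Rightarrow> 'b \<Rightarrow> bool) \<Rightarrow> 'a \<times> 'b \<Rightarrow> 'a \<times> 'b \<Rightarrow> bool" where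
  "cprod_E E1 E2 p q \<longleftrightarrow> (fst p = fst q \<and> E2 (snd p) (snd q)) \<or> (snd p = snd q \<and> E1 (fst p) (fst q))"

end

theory Submission
  imports Defs
begin

(* In P_m x C_5 the distance between (c, j) and (d, k) is |c - d| plus the distance of j and k
   in C_5, which is at most 2.  Hence a broadcast of strength 2 from column d is heard by 5, 3, 1
   vertices of the columns at distance 0, 1, 2 from d, and one of strength 1 by 3, 1 vertices of
   the columns at distance 0, 1.  If a c and b c count the broadcasts of strength 2 and 1 in
   column c, covering the 5 vertices of every column forces the linear constraints
   "5 <= coverage a b c", and the lower bound becomes an arithmetic statement: such profiles cost
   sum (2 a c + b c) >= m.  This is proved by induction on m, peeling off an initial block of at
   most three columns that pays one per column and handing its surplus to the next column as
   extra broadcasts of strength 1.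
   For the upper bound, strength-2 broadcasts in the odd columns, in rows alternating between 0
   and 2, cover every column except parts of the first one and, for odd m, of the last one; one
   broadcast of strength 1 repairs each, for a total cost of 2 (m div 2) + 1 + (m mod 2) = m + 1. *)

section \<open>Graph distance\<close>

lemma is_walk_Cons:
  "is_walk V E (x # xs) \<longleftrightarrow> x \<in> V \<and> (xs = [] \<or> E x (hd xs) \<and> is_walk V E xs)"
proof (cases xs)
  case (Cons y ys)
  have "(\<forall>i. Suc i < length (x # xs) \<longrightarrow> E ((x # xs) ! i) ((x # xs) ! Suc i)) \<longleftrightarrow>
        E x y \<and> (\<forall>i. Suc i < length xs \<longrightarrow> E (xs ! i) (xs ! Suc i))"
    using Cons by (auto simp: nth_Cons split: nat.splits)
  then show ?thesis using Cons by (auto simp: is_walk_def)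
qed (simp add: is_walk_def)

lemma is_walk_hd_dist_less_length:
  fixes D :: "'a \<Rightarrow> nat"
  assumes "is_walk V E xs" "last xs = q" "D q = 0"
    and lipschitz: "\<And>x y. x \<in> V \<Longrightarrow> y \<in> V \<Longrightarrow> E x y \<Longrightarrow> D x \<le> Suc (D y)"
  shows "D (hd xs) < length xs"
  using assms(1,2)
proof (induction xs)
  case (Cons x xs)
  show ?case
  proof (cases xs)
    case Nil
    then show ?thesis using Cons.prems \<open>D q = 0\<close> by simp
  next
    case (Cons y ys)
    then have "x \<in> V" "y \<in> V" "E x y" "is_walk V E xs"
      using \<open>is_walk V E (x # xs)\<close> by (auto simp: is_walk_Cons)
    moreover have "D y < length xs"
      using Cons.IH \<open>is_walk V E xs\<close> Cons.prems(2) \<open>xs = y # ys\<close> by simp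
    ultimately show ?thesis using lipschitz by fastforce
  qed
qed (simp add: is_walk_def)

lemma ex_walk_of_descent:
  fixes D :: "'a \<Rightarrow> nat"
  assumes "p \<in> V" "q \<in> V" "D q = 0"
    and descent: "\<And>x. x \<in> V \<Longrightarrow> x \<noteq> q \<Longrightarrow> \<exists>y\<in>V. E x y \<and> D x = Suc (D y)"
  shows "\<exists>xs. is_walk V E xs \<and> hd xs = p \<and> last xs = q \<and> length xs = Suc (D p)"
  using assms(1)
proof (induction "D p" arbitrary: p)
  case 0
  then have "p = q" using descent by fastforce
  then show ?case using \<open>q \<in> V\<close> \<open>D q = 0\<close> by (intro exI[of _ "[q]"]) (simp add: is_walk_def)
next
  case (Suc n)
  then have "p \<noteq> q" using \<open>D q = 0\<close> by auto
  then obtain y where "y \<in> V" "E p y" "D p = Suc (D y)" using descent \<open>p \<in> V\<close> by blast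
  moreover obtain xs where "is_walk V E xs" "hd xs = y" "last xs = q" "length xs = Suc (D y)"
    using Suc.hyps \<open>y \<in> V\<close> \<open>D p = Suc (D y)\<close> by auto
  moreover have "xs \<noteq> []" using \<open>is_walk V E xs\<close> by (simp add: is_walk_def)
  ultimately show ?case using \<open>p \<in> V\<close>
    by (intro exI[of _ "p # xs"]) (simp add: is_walk_Cons)
qed

lemma gdist_eqI:
  fixes D :: "'a \<Rightarrow> nat"
  assumes "p \<in> V" "q \<in> V" "D q = 0"
    and lipschitz: "\<And>x y. x \<in> V \<Longrightarrow> y \<in> V \<Longrightarrow> E x y \<Longrightarrow> D x \<le> Suc (D y)"
    and descent: "\<And>x. x \<in> V \<Longrightarrow> x \<noteq> q \<Longrightarrow> \<exists>y\<in>V. E x y \<and> D x = Suc (D y)"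
  shows "gdist V E p q = D p"
  unfolding gdist_def
proof (rule Least_equality)
  show "\<exists>xs. is_walk V E xs \<and> hd xs = p \<and> last xs = q \<and> length xs = Suc (D p)"
    using ex_walk_of_descent[OF assms(1-3) descent] .
next
  fix n assume "\<exists>xs. is_walk V E xs \<and> hd xs = p \<and> last xs = q \<and> length xs = Suc n"
  then show "D p \<le> n" using is_walk_hd_dist_less_length[where D = D, OF _ _ \<open>D q = 0\<close>] lipschitz by fastforce
qed

section \<open>Distances in the cylinder\<close>

definition nat_dist :: "nat \<Rightarrow> nat \<Rightarrow> nat" where
  "nat_dist i j = (i - j) + (j - i)"

definition c5_dist :: "nat \<Rightarrow> nat \<Rightarrow> nat" where
  "c5_dist j k = min (nat_dist j k) (5 - nat_dist j k)"

lemma less_5_cases: "(j::nat) < 5 \<Longrightarrow> j = 0 \<or> j = 1 \<or> j = 2 \<or> j = 3 \<or> j = 4"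
  by auto

lemma c5_dist_le_2: "j < 5 \<Longrightarrow> k < 5 \<Longrightarrow> c5_dist j k \<le> 2"
  by (auto dest!: less_5_cases simp: c5_dist_def nat_dist_def)

lemma c5_dist_lipschitz:
  "j < 5 \<Longrightarrow> k < 5 \<Longrightarrow> l < 5 \<Longrightarrow> cycle_E 5 j k \<Longrightarrow> c5_dist j l \<le> Suc (c5_dist k l)"
  by (auto dest!: less_5_cases simp: c5_dist_def nat_dist_def cycle_E_def)

lemma c5_dist_descent:
  assumes "j < 5" "k < 5" "j \<noteq> k"
  shows "\<exists>j'<5. cycle_E 5 j j' \<and> c5_dist j k = Suc (c5_dist j' k)"
proof -
  have "cycle_E 5 j ((j + 1) mod 5)" "cycle_E 5 j ((j + 4) mod 5)"
    using less_5_cases[OF \<open>j < 5\<close>] by (auto simp: cycle_E_def)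
  moreover have "c5_dist j k = Suc (c5_dist ((j + 1) mod 5) k)
               \<or> c5_dist j k = Suc (c5_dist ((j + 4) mod 5) k)"
    using less_5_cases[OF \<open>j < 5\<close>] less_5_cases[OF \<open>k < 5\<close>] \<open>j \<noteq> k\<close>
    by (elim disjE) (simp_all add: c5_dist_def nat_dist_def)
  ultimately show ?thesis by (meson mod_less_divisor zero_less_numeral)
qed

lemma card_Collect_less_eq_length_filter: "card {j. j < n \<and> P j} = length (filter P [0..<n])"
proof -
  have "{j. j < n \<and> P j} = set (filter P [0..<n])" by auto
  then show ?thesis using distinct_card[of "filter P [0..<n]"] by simp
qed

lemma card_c5_ball:
  assumes "k < 5"
  shows "card {j. j < 5 \<and> c5_dist j k \<le> r} = min 5 (2 * r + 1)"
proof -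
  consider "r = 0" | "r = 1" | "2 \<le> r" by linarith
  then show ?thesis
  proof cases
    case 3
    then have "{j. j < 5 \<and> c5_dist j k \<le> r} = {..<5}" using c5_dist_le_2[OF _ assms] by fastforce
    then show ?thesis using 3 by simp
  qed (use less_5_cases[OF assms] in \<open>(elim disjE; simp add: card_Collect_less_eq_length_filter c5_dist_def nat_dist_def upt_rec)+\<close>)
qed

lemma c5_dist_2_cover:
  assumes "s < 5" "s' < 5" "c5_dist s s' = 2" "j < 5"
  shows "c5_dist j s \<le> 1 \<or> c5_dist j s' \<le> 1"
  using less_5_cases[OF assms(1)] less_5_cases[OF assms(2)] less_5_cases[OF assms(4)] assms(3)
  by (elim disjE) (simp_all add: c5_dist_def nat_dist_def)

definition cyl_dist :: "nat \<times> nat \<Rightarrow> nat \<times> nat \<Rightarrow> nat" where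
  "cyl_dist p q = nat_dist (fst p) (fst q) + c5_dist (snd p) (snd q)"

abbreviation cyl_V :: "nat \<Rightarrow> (nat \<times> nat) set" where
  "cyl_V m \<equiv> cprod_V (path_V m) (cycle_V 5)"

abbreviation cyl_E :: "nat \<times> nat \<Rightarrow> nat \<times> nat \<Rightarrow> bool" where
  "cyl_E \<equiv> cprod_E path_E (cycle_E 5)"

lemma cyl_V_iff: "(i, j) \<in> cyl_V m \<longleftrightarrow> i < m \<and> j < 5"
  by (simp add: cprod_V_def path_V_def cycle_V_def)

lemma sum_cyl_V: "(\<Sum>v\<in>cyl_V m. g v) = (\<Sum>d<m. \<Sum>k<5. g (d, k))"
  by (simp add: cprod_V_def path_V_def cycle_V_def sum.cartesian_product atLeast0LessThan)

lemma cyl_dist_lipschitz: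
  assumes "u \<in> cyl_V m" "v \<in> cyl_V m" "w \<in> cyl_V m" "cyl_E u v"
  shows "cyl_dist u w \<le> Suc (cyl_dist v w)"
proof -
  obtain i j i' j' where uv: "u = (i, j)" "v = (i', j')" by (cases u, cases v)
  have "j < 5" "j' < 5" "snd w < 5" using assms(1-3) by (auto simp: uv cyl_V_iff cprod_V_def cycle_V_def)
  then show ?thesis using assms(4) c5_dist_lipschitz[of j j' "snd w"]
    by (auto simp: uv cyl_dist_def nat_dist_def cprod_E_def path_E_def)
qed

lemma cyl_dist_descent:
  assumes "u \<in> cyl_V m" "w \<in> cyl_V m" "u \<noteq> w"
  shows "\<exists>v\<in>cyl_V m. cyl_E u v \<and> cyl_dist u w = Suc (cyl_dist v w)"
proof -
  obtain i j i' j' where ij: "u = (i, j)" "w = (i', j')" by (cases u, cases w)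
  have lt: "i < m" "j < 5" "i' < m" "j' < 5" using assms(1,2) by (simp_all add: ij cyl_V_iff)
  consider "i < i'" | "i' < i" | "i = i'" "j \<noteq> j'" using assms(3) unfolding ij by (metis linorder_neqE_nat)
  then show ?thesis
  proof cases
    case 1
    then show ?thesis using lt
      by (intro bexI[of _ "(Suc i, j)"]) (auto simp: ij cyl_V_iff cyl_dist_def nat_dist_def cprod_E_def path_E_def)
  next
    case 2
    then show ?thesis using lt
      by (intro bexI[of _ "(i - 1, j)"]) (auto simp: ij cyl_V_iff cyl_dist_def nat_dist_def cprod_E_def path_E_def)
  next
    case 3
    then obtain j'' where "j'' < 5" "cycle_E 5 j j''" "c5_dist j j' = Suc (c5_dist j'' j')"
      using c5_dist_descent lt by blast
    then show ?thesis using 3 lt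
      by (intro bexI[of _ "(i, j'')"]) (auto simp: ij cyl_V_iff cyl_dist_def nat_dist_def cprod_E_def)
  qed
qed

lemma cyl_dist_self: "cyl_dist u u = 0"
  by (simp add: cyl_dist_def nat_dist_def c5_dist_def)

lemma gdist_cyl: "u \<in> cyl_V m \<Longrightarrow> w \<in> cyl_V m \<Longrightarrow> gdist (cyl_V m) cyl_E u w = cyl_dist u w"
  by (rule gdist_eqI[where D = "\<lambda>u. cyl_dist u w"])
    (simp_all add: cyl_dist_self cyl_dist_lipschitz cyl_dist_descent)

definition cyl_heard :: "nat \<Rightarrow> (nat \<times> nat \<Rightarrow> nat) \<Rightarrow> nat \<Rightarrow> nat \<Rightarrow> bool" where
  "cyl_heard m f c j \<longleftrightarrow>
     (\<exists>d k. d < m \<and> k < 5 \<and> 0 < f (d, k) \<and> nat_dist c d + c5_dist j k \<le> f (d, k))"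

lemma cyl_heardI:
  "d < m \<Longrightarrow> k < 5 \<Longrightarrow> 0 < f (d, k) \<Longrightarrow> nat_dist c d + c5_dist j k \<le> f (d, k) \<Longrightarrow> cyl_heard m f c j"
  unfolding cyl_heard_def by blast

lemma dominating_broadcast_cyl_iff:
  "dominating_broadcast (cyl_V m) cyl_E f \<longleftrightarrow> (\<forall>c<m. \<forall>j<5. cyl_heard m f c j)"
proof -
  have "(\<exists>v\<in>cyl_V m. hears (cyl_V m) cyl_E f (c, j) v) \<longleftrightarrow> cyl_heard m f c j"
    if "c < m" "j < 5" for c j
    using that unfolding cyl_heard_def
    by (auto simp: hears_def gdist_cyl cyl_V_iff cyl_dist_def) blast
  then show ?thesis by (auto simp: dominating_broadcast_def cyl_V_iff)
qed

section \<open>Covering profiles\<close>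

definition before :: "(nat \<Rightarrow> nat) \<Rightarrow> nat \<Rightarrow> nat \<Rightarrow> nat" where
  "before a c k = (if k \<le> c then a (c - k) else 0)"

(* a d and b d count the broadcasts of strength 2 and 1 in column d; the coefficient of each is
   ball_weight r |c - d|, the number of vertices of column c that can hear it. *)
definition coverage :: "(nat \<Rightarrow> nat) \<Rightarrow> (nat \<Rightarrow> nat) \<Rightarrow> nat \<Rightarrow> nat" where
  "coverage a b c = 5 * a c + 3 * (b c + before a c 1 + a (c + 1)) + before b c 1 + b (c + 1)
                    + before a c 2 + a (c + 2)"

definition covering_profile :: "nat \<Rightarrow> (nat \<Rightarrow> nat) \<Rightarrow> (nat \<Rightarrow> nat) \<Rightarrow> bool" where
  "covering_profile M a b \<longleftrightarrow> (\<forall>c\<ge>M. a c = 0 \<and> b c = 0) \<and> (\<forall>c<M. 5 \<le> coverage a b c)"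

definition prefix_cost :: "(nat \<Rightarrow> nat) \<Rightarrow> (nat \<Rightarrow> nat) \<Rightarrow> nat \<Rightarrow> nat" where
  "prefix_cost a b p = (\<Sum>c<p. 2 * a c + b c)"

definition peeled_a :: "nat \<Rightarrow> (nat \<Rightarrow> nat) \<Rightarrow> nat \<Rightarrow> nat" where
  "peeled_a p a = (\<lambda>c. a (c + p))"

(* The cost of the first p columns in excess of p is handed on to the new first column as extra
   strength-1 broadcasts.  This credit reaches columns 0 and 1 of the remainder, the only ones that
   lose coverage from the removed columns, so peelable checks just these two. *)
definition peeled_b :: "nat \<Rightarrow> (nat \<Rightarrow> nat) \<Rightarrow> (nat \<Rightarrow> nat) \<Rightarrow> nat \<Rightarrow> nat" where
  "peeled_b p a b = (\<lambda>c. b (c + p) + (if c = 0 then prefix_cost a b p - p else 0))"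

definition peelable :: "nat \<Rightarrow> (nat \<Rightarrow> nat) \<Rightarrow> (nat \<Rightarrow> nat) \<Rightarrow> nat \<Rightarrow> bool" where
  "peelable M a b p \<longleftrightarrow> 0 < p \<and> p \<le> M \<and> p \<le> prefix_cost a b p \<and>
     (\<forall>c<2. c + p < M \<longrightarrow> 5 \<le> coverage (peeled_a p a) (peeled_b p a b) c)"

lemma prefix_cost_0 [simp]: "prefix_cost a b 0 = 0"
  by (simp add: prefix_cost_def)

lemma prefix_cost_Suc [simp]: "prefix_cost a b (Suc p) = prefix_cost a b p + 2 * a p + b p"
  by (simp add: prefix_cost_def)

lemma prefix_cost_add:
  "prefix_cost a b (p + n) = prefix_cost a b p + prefix_cost (\<lambda>c. a (c + p)) (\<lambda>c. b (c + p)) n"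
  by (induction n) (simp_all add: add.commute)

lemma coverage_peeled:
  assumes "2 \<le> c"
  shows "coverage (peeled_a p a) (peeled_b p a b) c = coverage a b (c + p)"
  using assms by (simp add: coverage_def before_def peeled_a_def peeled_b_def)

lemma covering_profile_peeled:
  assumes "covering_profile M a b" "peelable M a b p" "p < M"
  shows "covering_profile (M - p) (peeled_a p a) (peeled_b p a b)"
  unfolding covering_profile_def
proof (intro conjI allI impI)
  fix c assume "M - p \<le> c"
  then show "peeled_a p a c = 0" "peeled_b p a b c = 0"
    using assms by (auto simp: covering_profile_def peelable_def peeled_a_def peeled_b_def)
next
  fix c assume "c < M - p"
  then show "5 \<le> coverage (peeled_a p a) (peeled_b p a b) c"
    using assms coverage_peeled[of c p a b]
    by (cases "c < 2") (auto simp: covering_profile_def peelable_def)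
qed

lemma prefix_cost_peeled:
  assumes "p < M" "p \<le> prefix_cost a b p"
  shows "prefix_cost a b M = p + prefix_cost (peeled_a p a) (peeled_b p a b) (M - p)"
proof -
  have credit: "prefix_cost a' (\<lambda>c. b' c + (if c = 0 then x else 0)) n = prefix_cost a' b' n + x"
    if "0 < n" for a' b' x and n :: nat
    using that by (induction n) auto
  have "prefix_cost a b M = prefix_cost a b p + prefix_cost (peeled_a p a) (\<lambda>c. b (c + p)) (M - p)"
    using prefix_cost_add[of a b p "M - p"] assms(1) by (simp add: peeled_a_def)
  also have "\<dots> = p + prefix_cost (peeled_a p a) (peeled_b p a b) (M - p)"
    using credit[of "M - p" "peeled_a p a" "\<lambda>c. b (c + p)"] assms by (simp add: peeled_b_def)
  finally show ?thesis .
qed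

lemma peelableI:
  assumes "0 < p" "p \<le> M" "p \<le> prefix_cost a b p"
    and "p < M \<Longrightarrow> 5 \<le> coverage (peeled_a p a) (peeled_b p a b) 0"
    and "Suc p < M \<Longrightarrow> 5 \<le> coverage (peeled_a p a) (peeled_b p a b) 1"
  shows "peelable M a b p"
  using assms by (auto simp: peelable_def less_2_cases_iff)

lemma covering_profile_coverage: "covering_profile M a b \<Longrightarrow> c < M \<Longrightarrow> 5 \<le> coverage a b c"
  by (simp add: covering_profile_def)

lemma covering_profile_support: "covering_profile M a b \<Longrightarrow> 0 < a c \<or> 0 < b c \<Longrightarrow> c < M"
  by (metis covering_profile_def not_le not_less0)

lemmas coverage_simps = coverage_def before_def peeled_a_def peeled_b_def eval_nat_numeral

lemma peelable_exists_first_column_single: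
  assumes "covering_profile M a b" "0 < M" "a 0 = 0" "b 0 = 1"
  shows "\<exists>p. peelable M a b p"
proof -
  note K = covering_profile_coverage[OF assms(1)]
  have K0: "2 \<le> 3 * a 1 + b 1 + a 2" using K[of 0] assms(2-4) by (simp add: coverage_simps)
  show ?thesis
  proof (cases "a 1 + b 1 = 0")
    case True
    have "peelable M a b 1"
      by (rule peelableI) (use True assms(2-4) K0 K[of 1] K[of 2] in \<open>simp_all add: coverage_simps\<close>)
    then show ?thesis ..
  next
    case False
    then have "1 < M" using covering_profile_support[OF assms(1), of 1] by simp
    consider "1 \<le> a 1" | "a 1 = 0" "2 \<le> b 1" | "a 1 = 0" "b 1 = 1"
      using False by linarith
    then show ?thesis
      by cases (rule exI[of _ 2], rule peelableI,
                use K0 K[of 2] K[of 3] \<open>1 < M\<close> assms(3,4) in \<open>simp_all add: coverage_simps\<close>)+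
  qed
qed

lemma peelable_exists_first_column_empty:
  assumes "covering_profile M a b" "0 < M" "a 0 = 0" "b 0 = 0"
  shows "\<exists>p. peelable M a b p"
proof -
  note K = covering_profile_coverage[OF assms(1)]
  have K0: "5 \<le> 3 * a 1 + b 1 + a 2" using K[of 0] assms(2-4) by (simp add: coverage_simps)
  have "1 < M"
  proof (rule ccontr)
    assume "\<not> 1 < M"
    then have "a 1 = 0" "b 1 = 0" "a 2 = 0" using assms(1) by (auto simp: covering_profile_def)
    with K0 show False by simp
  qed
  consider "2 \<le> a 1" | "a 1 = 1" "2 \<le> a 2" | "a 1 = 1" "a 2 \<le> 1" | "a 1 = 0" "2 \<le> b 1"
    | "a 1 = 0" "b 1 \<le> 1"
    by linarith
  then show ?thesis
  proof cases
    case 5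
    then have "2 < M" using covering_profile_support[OF assms(1), of 2] K0 by simp
    have "peelable M a b 3"
      by (rule peelableI) (use 5 assms(3,4) \<open>2 < M\<close> K0 K[of 3] K[of 4] in \<open>simp_all add: coverage_simps\<close>)
    then show ?thesis ..
  qed (rule exI[of _ 2], rule peelableI,
       use K0 K[of 2] K[of 3] \<open>1 < M\<close> assms(3,4) in \<open>simp_all add: coverage_simps\<close>)+
qed

lemma peelable_exists:
  assumes "covering_profile M a b" "0 < M"
  shows "\<exists>p. peelable M a b p"
proof -
  note K = covering_profile_coverage[OF assms(1)]
  consider "2 \<le> 2 * a 0 + b 0" | "a 0 = 0" "b 0 = 1" | "a 0 = 0" "b 0 = 0"
    by linarith
  then show ?thesis
  proof cases
    case 1
    have "peelable M a b 1"
      by (rule peelableI) (use 1 assms(2) K[of 1] K[of 2] in \<open>simp_all add: coverage_simps\<close>)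
    then show ?thesis ..
  qed (use assms peelable_exists_first_column_single peelable_exists_first_column_empty in blast)+
qed

lemma covering_profile_cost_ge: "covering_profile M a b \<Longrightarrow> M \<le> prefix_cost a b M"
proof (induction M arbitrary: a b rule: less_induct)
  case (less M)
  show ?case
  proof (cases "M = 0")
    case False
    then obtain p where p: "peelable M a b p" using peelable_exists less.prems by blast
    show ?thesis
    proof (cases "p = M")
      case True
      then show ?thesis using p by (simp add: peelable_def)
    next
      case False
      then have "p < M" "0 < p" using p by (auto simp: peelable_def)
      then have "M - p \<le> prefix_cost (peeled_a p a) (peeled_b p a b) (M - p)"
        using less.IH[of "M - p"] covering_profile_peeled[OF less.prems p] by simp
      then show ?thesis using prefix_cost_peeled[OF \<open>p < M\<close>] p by (simp add: peelable_def)
    qed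
  qed simp
qed

section \<open>The lower bound\<close>

lemma sum_comp_le_2:
  fixes g :: "'a \<Rightarrow> nat" and h :: "nat \<Rightarrow> nat"
  assumes "finite A" "\<forall>x\<in>A. g x \<le> 2"
  shows "(\<Sum>x\<in>A. h (g x)) =
    h 0 * card {x\<in>A. g x = 0} + h 1 * card {x\<in>A. g x = 1} + h 2 * card {x\<in>A. g x = 2}"
proof -
  have "(\<Sum>x\<in>A. h (g x)) = (\<Sum>y\<in>{0, 1, 2}. \<Sum>x\<in>{x\<in>A. g x = y}. h (g x))"
    by (rule sum.group[symmetric]) (use assms in auto)
  also have "\<dots> = (\<Sum>y\<in>{0, 1, 2}. h y * card {x\<in>A. g x = y})"
    by (intro sum.cong refl) simp
  finally show ?thesis by simp
qed

definition column_count :: "nat \<Rightarrow> (nat \<times> nat \<Rightarrow> nat) \<Rightarrow> nat \<Rightarrow> nat \<Rightarrow> nat" where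
  "column_count m f r c = card {k. (c, k) \<in> cyl_V m \<and> f (c, k) = r}"

lemma broadcast_cost_cyl:
  assumes "two_limited_broadcast (cyl_V m) f"
  shows "broadcast_cost (cyl_V m) f = prefix_cost (column_count m f 2) (column_count m f 1) m"
  unfolding broadcast_cost_def sum_cyl_V prefix_cost_def
proof (rule sum.cong)
  fix c assume "c \<in> {..<m}"
  then have "\<forall>k\<in>{..<5}. f (c, k) \<le> 2"
    using assms by (simp add: two_limited_broadcast_def cyl_V_iff)
  then show "(\<Sum>k<5. f (c, k)) = 2 * column_count m f 2 c + column_count m f 1 c"
    using sum_comp_le_2[of "{..<5}" "\<lambda>k. f (c, k)" id] \<open>c \<in> {..<m}\<close>
    by (simp add: column_count_def cyl_V_iff)
qed simp

definition ball_weight :: "nat \<Rightarrow> nat \<Rightarrow> nat" where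
  "ball_weight r n = (if 0 < r \<and> n \<le> r then min 5 (2 * (r - n) + 1) else 0)"

lemma card_c5_hearers:
  assumes "k < 5"
  shows "card {j. j < 5 \<and> 0 < r \<and> n + c5_dist j k \<le> r} = ball_weight r n"
proof (cases "0 < r \<and> n \<le> r")
  case True
  then have "{j. j < 5 \<and> 0 < r \<and> n + c5_dist j k \<le> r} = {j. j < 5 \<and> c5_dist j k \<le> r - n}"
    by auto
  then show ?thesis using True card_c5_ball[OF assms] by (simp add: ball_weight_def)
next
  case False
  then have "{j. j < 5 \<and> 0 < r \<and> n + c5_dist j k \<le> r} = {}" by auto
  moreover have "ball_weight r n = 0" using False by (simp add: ball_weight_def)
  ultimately show ?thesis by (metis card.empty)
qed

definition column_hearers :: "nat \<Rightarrow> (nat \<times> nat \<Rightarrow> nat) \<Rightarrow> nat \<Rightarrow> nat \<Rightarrow> nat set" where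
  "column_hearers m f c d = (\<Union>k\<in>{k. (d, k) \<in> cyl_V m}.
     {j. j < 5 \<and> 0 < f (d, k) \<and> nat_dist c d + c5_dist j k \<le> f (d, k)})"

lemma card_column_hearers:
  assumes "two_limited_broadcast (cyl_V m) f"
  shows "card (column_hearers m f c d) \<le>
    ball_weight 2 (nat_dist c d) * column_count m f 2 d + ball_weight 1 (nat_dist c d) * column_count m f 1 d"
proof -
  let ?K = "{k. (d, k) \<in> cyl_V m}" and ?n = "nat_dist c d"
  have fin: "finite ?K" by (simp add: cyl_V_iff)
  have "card (column_hearers m f c d)
      \<le> (\<Sum>k\<in>?K. card {j. j < 5 \<and> 0 < f (d, k) \<and> ?n + c5_dist j k \<le> f (d, k)})"
    unfolding column_hearers_def by (rule card_UN_le[OF fin])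
  also have "\<dots> = (\<Sum>k\<in>?K. ball_weight (f (d, k)) ?n)"
    by (intro sum.cong refl) (simp add: card_c5_hearers cyl_V_iff)
  also have "\<dots> = ball_weight 2 ?n * column_count m f 2 d + ball_weight 1 ?n * column_count m f 1 d"
    using assms sum_comp_le_2[OF fin, of "\<lambda>k. f (d, k)" "\<lambda>r. ball_weight r ?n"]
    by (simp add: two_limited_broadcast_def column_count_def ball_weight_def)
  finally show ?thesis .
qed

lemma column_hearers_cover:
  assumes "two_limited_broadcast (cyl_V m) f" "dominating_broadcast (cyl_V m) cyl_E f" "c < m"
  shows "{..<5} \<subseteq> (\<Union>d\<in>{d. nat_dist c d \<le> 2}. column_hearers m f c d)"
proof
  fix j :: nat assume "j \<in> {..<5}"
  then have "cyl_heard m f c j" using assms(2,3) by (simp add: dominating_broadcast_cyl_iff)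
  then obtain d k where "d < m" "k < 5" "0 < f (d, k)" "nat_dist c d + c5_dist j k \<le> f (d, k)"
    unfolding cyl_heard_def by blast
  moreover have "(d, k) \<in> cyl_V m" using \<open>d < m\<close> \<open>k < 5\<close> by (simp add: cyl_V_iff)
  moreover have "nat_dist c d \<le> 2"
    using assms(1) \<open>(d, k) \<in> cyl_V m\<close> \<open>nat_dist c d + c5_dist j k \<le> f (d, k)\<close>
    by (force simp: two_limited_broadcast_def)
  ultimately show "j \<in> (\<Union>d\<in>{d. nat_dist c d \<le> 2}. column_hearers m f c d)"
    using \<open>j \<in> {..<5}\<close> unfolding column_hearers_def by blast
qed

lemma sum_nat_dist_le_2:
  "(\<Sum>d | nat_dist c d \<le> 2. g (nat_dist c d) d)
     = g 0 c + g 1 (c + 1) + g 2 (c + 2) + before (g 1) c 1 + before (g 2) c 2"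
proof -
  consider "c = 0" | "c = 1" | "2 \<le> c" by linarith
  then show ?thesis
  proof cases
    case 1
    then have "{d. nat_dist c d \<le> 2} = {0, 1, 2}" by (auto simp: nat_dist_def)
    then show ?thesis using 1 by (simp add: nat_dist_def before_def eval_nat_numeral)
  next
    case 2
    then have "{d. nat_dist c d \<le> 2} = {0, 1, 2, 3}" by (auto simp: nat_dist_def)
    then show ?thesis using 2 by (simp add: nat_dist_def before_def eval_nat_numeral)
  next
    case 3
    then obtain e where "c = e + 2" using le_Suc_ex by (metis add.commute)
    then have "{d. nat_dist c d \<le> 2} = {e, e + 1, e + 2, e + 3, e + 4}" by (auto simp: nat_dist_def)
    then show ?thesis using \<open>c = e + 2\<close> by (simp add: nat_dist_def before_def eval_nat_numeral)
  qed
qed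

lemma cyl_column_coverage:
  assumes "two_limited_broadcast (cyl_V m) f" "dominating_broadcast (cyl_V m) cyl_E f" "c < m"
  shows "5 \<le> coverage (column_count m f 2) (column_count m f 1) c"
proof -
  let ?N = "{d. nat_dist c d \<le> 2}" and ?a = "column_count m f 2" and ?b = "column_count m f 1"
  have "finite ?N" by (rule finite_subset[of _ "{..c + 2}"]) (auto simp: nat_dist_def)
  have "finite (column_hearers m f c d)" for d
    by (rule finite_subset[of _ "{..<5}"]) (auto simp: column_hearers_def)
  then have "5 \<le> card (\<Union>d\<in>?N. column_hearers m f c d)"
    using card_mono[OF _ column_hearers_cover[OF assms]] \<open>finite ?N\<close> by simp
  also have "\<dots> \<le> (\<Sum>d\<in>?N. card (column_hearers m f c d))"
    by (rule card_UN_le[OF \<open>finite ?N\<close>])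
  also have "\<dots> \<le> (\<Sum>d\<in>?N. ball_weight 2 (nat_dist c d) * ?a d + ball_weight 1 (nat_dist c d) * ?b d)"
    by (rule sum_mono) (rule card_column_hearers[OF assms(1)])
  also have "\<dots> = coverage ?a ?b c"
    unfolding sum_nat_dist_le_2[where g = "\<lambda>n d. ball_weight 2 n * ?a d + ball_weight 1 n * ?b d"]
    by (simp add: coverage_def before_def ball_weight_def)
  finally show ?thesis .
qed

lemma cyl_broadcast_cost_ge:
  assumes "two_limited_broadcast (cyl_V m) f" "dominating_broadcast (cyl_V m) cyl_E f"
  shows "m \<le> broadcast_cost (cyl_V m) f"
proof -
  have "covering_profile m (column_count m f 2) (column_count m f 1)"
    using cyl_column_coverage[OF assms] by (simp add: covering_profile_def column_count_def cyl_V_iff)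
  then show ?thesis using covering_profile_cost_ge broadcast_cost_cyl[OF assms(1)] by simp
qed

section \<open>The upper bound\<close>

definition stagger :: "nat \<Rightarrow> nat" where
  "stagger d = 2 * (d div 2 mod 2)"

lemma stagger_cases: "stagger d = 0 \<or> stagger d = 2"
  by (auto simp: stagger_def)

lemma stagger_neighbours: "even c \<Longrightarrow> 2 \<le> c \<Longrightarrow> stagger (c - 1) + stagger (c + 1) = 2"
  by (auto elim!: evenE simp: stagger_def) presburger

definition cyl_broadcast :: "nat \<Rightarrow> nat \<times> nat \<Rightarrow> nat" where
  "cyl_broadcast m v =
     (if fst v < m \<and> odd (fst v) \<and> snd v = stagger (fst v) then 2 else 0)
     + (if v = (0, 2) then 1 else 0)
     + (if odd m \<and> v = (m - 1, stagger (m - 2) + 2) then 1 else 0)"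

lemma cyl_broadcast_le_2: "3 \<le> m \<Longrightarrow> cyl_broadcast m v \<le> 2"
  by (auto simp: cyl_broadcast_def)

lemma cyl_broadcast_odd_column: "odd d \<Longrightarrow> d < m \<Longrightarrow> cyl_broadcast m (d, stagger d) = 2"
  by (auto simp: cyl_broadcast_def)

lemma cyl_heard_odd_column:
  assumes "odd d" "d < m" "nat_dist c d + c5_dist j (stagger d) \<le> 2"
  shows "cyl_heard m (cyl_broadcast m) c j"
  using assms stagger_cases[of d] by (intro cyl_heardI[of d m "stagger d"]) (auto simp: cyl_broadcast_odd_column)

lemma cyl_heard_first_column:
  assumes "3 \<le> m" "j < 5"
  shows "cyl_heard m (cyl_broadcast m) 0 j"
proof -
  have "c5_dist j 0 \<le> 1 \<or> c5_dist j 2 \<le> 1"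
    by (rule c5_dist_2_cover) (simp_all add: \<open>j < 5\<close> c5_dist_def nat_dist_def)
  then show ?thesis
  proof
    assume "c5_dist j 0 \<le> 1"
    then show ?thesis using assms by (intro cyl_heard_odd_column[of 1]) (simp_all add: stagger_def nat_dist_def)
  next
    assume "c5_dist j 2 \<le> 1"
    then show ?thesis using assms by (intro cyl_heardI[of 0 m 2]) (simp_all add: cyl_broadcast_def nat_dist_def)
  qed
qed

lemma cyl_heard_inner_even_column:
  assumes "even c" "2 \<le> c" "c + 1 < m" "j < 5"
  shows "cyl_heard m (cyl_broadcast m) c j"
proof -
  have "c5_dist j (stagger (c - 1)) \<le> 1 \<or> c5_dist j (stagger (c + 1)) \<le> 1"
    using stagger_neighbours[OF assms(1,2)] stagger_cases[of "c - 1"] \<open>j < 5\<close>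
    by (intro c5_dist_2_cover) (auto simp: c5_dist_def nat_dist_def)
  then show ?thesis
  proof
    assume "c5_dist j (stagger (c - 1)) \<le> 1"
    then show ?thesis using assms by (intro cyl_heard_odd_column[of "c - 1"]) (simp_all add: nat_dist_def)
  next
    assume "c5_dist j (stagger (c + 1)) \<le> 1"
    then show ?thesis using assms by (intro cyl_heard_odd_column[of "c + 1"]) (simp_all add: nat_dist_def)
  qed
qed

lemma cyl_heard_last_column:
  assumes "even c" "2 \<le> c" "c + 1 = m" "j < 5"
  shows "cyl_heard m (cyl_broadcast m) c j"
proof -
  let ?s = "stagger (c - 1)"
  have last: "odd (c - 1)" "nat_dist c (c - 1) = 1" "odd m" "c < m" "m - 1 = c" "m - 2 = c - 1"
    using assms by (auto simp: nat_dist_def)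
  have "c5_dist j ?s \<le> 1 \<or> c5_dist j (?s + 2) \<le> 1"
    using stagger_cases[of "c - 1"] \<open>j < 5\<close> by (intro c5_dist_2_cover) (auto simp: c5_dist_def nat_dist_def)
  then show ?thesis
  proof
    assume "c5_dist j ?s \<le> 1"
    then show ?thesis using last by (intro cyl_heard_odd_column[of "c - 1"]) simp_all
  next
    assume "c5_dist j (?s + 2) \<le> 1"
    then show ?thesis using last stagger_cases[of "c - 1"]
      by (intro cyl_heardI[of c m "?s + 2"]) (auto simp: cyl_broadcast_def nat_dist_def)
  qed
qed

lemma cyl_broadcast_dominating:
  assumes "3 \<le> m"
  shows "dominating_broadcast (cyl_V m) cyl_E (cyl_broadcast m)"
  unfolding dominating_broadcast_cyl_iff
proof (intro allI impI)
  fix c j :: nat assume "c < m" "j < 5"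
  consider "odd c" | "c = 0" | "even c" "2 \<le> c" "c + 1 < m" | "even c" "2 \<le> c" "c + 1 = m"
    using \<open>c < m\<close> by (metis One_nat_def Suc_eq_plus1 Suc_lessI less_2_cases not_le odd_one)
  then show "cyl_heard m (cyl_broadcast m) c j"
  proof cases
    case 1
    have "stagger c < 5" using stagger_cases[of c] by auto
    then show ?thesis
      using 1 \<open>c < m\<close> c5_dist_le_2[OF \<open>j < 5\<close> \<open>stagger c < 5\<close>]
      by (intro cyl_heard_odd_column[of c m c j]) (simp_all add: nat_dist_def)
  qed (use assms \<open>j < 5\<close> cyl_heard_first_column cyl_heard_inner_even_column cyl_heard_last_column in auto)
qed

lemma cyl_broadcast_column_sum:
  "d < m \<Longrightarrow> (\<Sum>k<5. cyl_broadcast m (d, k)) =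
     (if odd d then 2 else 0) + (if d = 0 then 1 else 0) + (if odd m \<and> d = m - 1 then 1 else 0)"
  using stagger_cases[of d] stagger_cases[of "m - 2"] by (auto simp: cyl_broadcast_def sum.distrib stagger_def)

lemma sum_odd_lessThan: "(\<Sum>d<m. if odd d then 2 else 0) = 2 * (m div 2 :: nat)"
  by (induction m) (auto elim!: evenE oddE)

lemma cyl_broadcast_cost:
  assumes "3 \<le> m"
  shows "broadcast_cost (cyl_V m) (cyl_broadcast m) = m + 1"
proof -
  have "broadcast_cost (cyl_V m) (cyl_broadcast m) =
      (\<Sum>d<m. (if odd d then 2 else 0) + (if d = 0 then 1 else 0) + (if odd m \<and> d = m - 1 then 1 else 0))"
    by (simp add: broadcast_cost_def sum_cyl_V cyl_broadcast_column_sum)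
  also have "\<dots> = 2 * (m div 2) + 1 + (if odd m then 1 else 0)"
    using assms by (simp add: sum.distrib sum_odd_lessThan)
  also have "\<dots> = m + 1" by presburger
  finally show ?thesis .
qed

lemma gamma_b2_le:
  assumes "two_limited_broadcast V f" "dominating_broadcast V E f"
  shows "gamma_b2 V E \<le> broadcast_cost V f"
  unfolding gamma_b2_def using assms by (intro Least_le) blast

lemma gamma_b2_ge:
  assumes "two_limited_broadcast V f" "dominating_broadcast V E f"
    and "\<And>g. two_limited_broadcast V g \<Longrightarrow> dominating_broadcast V E g \<Longrightarrow> c \<le> broadcast_cost V g"
  shows "c \<le> gamma_b2 V E"
proof -
  have "\<exists>g. two_limited_broadcast V g \<and> dominating_broadcast V E g \<and> broadcast_cost V g = gamma_b2 V E"
    unfolding gamma_b2_def by (rule LeastI_ex) (use assms(1,2) in blast)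
  then obtain g where "two_limited_broadcast V g" "dominating_broadcast V E g"
    "broadcast_cost V g = gamma_b2 V E" by blast
  with assms(3) show ?thesis by metis
qed

theorem corollary4p6:
  fixes m :: nat
  assumes "m \<ge> 3"
  shows "m \<le> gamma_b2 (cprod_V (path_V m) (cycle_V 5)) (cprod_E path_E (cycle_E 5))
       \<and> gamma_b2 (cprod_V (path_V m) (cycle_V 5)) (cprod_E path_E (cycle_E 5)) \<le> m + 1"
proof
  have limited: "two_limited_broadcast (cyl_V m) (cyl_broadcast m)"
    using cyl_broadcast_le_2[OF assms] by (simp add: two_limited_broadcast_def)
  have dominating: "dominating_broadcast (cyl_V m) cyl_E (cyl_broadcast m)"
    using cyl_broadcast_dominating[OF assms] .
  show "m \<le> gamma_b2 (cyl_V m) cyl_E"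
    using limited dominating cyl_broadcast_cost_ge by (rule gamma_b2_ge)
  show "gamma_b2 (cyl_V m) cyl_E \<le> m + 1"
    using gamma_b2_le[OF limited dominating] cyl_broadcast_cost[OF assms] by simp
qed

end
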